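(* Let $n,m\geq 3$ be integers such that at least one of $n,m$ is even. Then $K_n\times K_m$ is type I, i.e. $\chi''(K_n\times K_m)=(n-1)(m-1)+1$.
   Context: All graphs are finite and simple. $K_n$ is the complete graph on $n$ vertices. A total colouring of a graph $G$ is an assignment of colours to the vertices and edges of $G$ such that any two adjacent vertices, any two edges sharing an endpoint, and any edge and each of its endpoints receive different colours. The total chromatic number $\chi''(G)$ is the minimum number of colours in a total colouring of $G$. A graph $G$ with maximum degree $\Delta(G)$ is called type I if $\chi''(G)=\Delta(G)+1$. The direct product $G\times H$ has vertex set $V(G)\times V(H)$, with $(u,v)$ adjacent to $(u',v')$ if and only if $uu'\in E(G)$ and $vv'\in E(H)$; $K_n\times K_m$ is $(n-1)(m-1)$-regular. *)

theory Defs
  imports Main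
begin

definition simple_graph :: "'a set \<Rightarrow> 'a set set \<Rightarrow> bool" where
  "simple_graph V E \<longleftrightarrow> finite V \<and> (\<forall>e\<in>E. \<exists>u v. u \<in> V \<and> v \<in> V \<and> u \<noteq> v \<and> e = {u, v})"

definition degree :: "'a set set \<Rightarrow> 'a \<Rightarrow> nat" where
  "degree E v = card {e \<in> E. v \<in> e}"

definition max_degree :: "'a set \<Rightarrow> 'a set set \<Rightarrow> nat" where
  "max_degree V E = Max (insert 0 (degree E ` V))"

definition total_colouring ::
  "'a set \<Rightarrow> 'a set set \<Rightarrow> nat \<Rightarrow> ('a \<Rightarrow> nat) \<Rightarrow> ('a set \<Rightarrow> nat) \<Rightarrow> bool" where
  "total_colouring V E k cv ce \<longleftrightarrow>
     (\<forall>v\<in>V. cv v < k) \<and> (\<forall>e\<in>E. ce e < k) \<and>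
     (\<forall>u\<in>V. \<forall>v\<in>V. {u, v} \<in> E \<longrightarrow> cv u \<noteq> cv v) \<and>
     (\<forall>e\<in>E. \<forall>f\<in>E. e \<noteq> f \<and> e \<inter> f \<noteq> {} \<longrightarrow> ce e \<noteq> ce f) \<and>
     (\<forall>e\<in>E. \<forall>v\<in>e. ce e \<noteq> cv v)"

definition total_chromatic_number :: "'a set \<Rightarrow> 'a set set \<Rightarrow> nat" where
  "total_chromatic_number V E = (LEAST k. \<exists>cv ce. total_colouring V E k cv ce)"

definition type_I :: "'a set \<Rightarrow> 'a set set \<Rightarrow> bool" where
  "type_I V E \<longleftrightarrow> total_chromatic_number V E = max_degree V E + 1"

definition KxK_vertices :: "nat \<Rightarrow> nat \<Rightarrow> (nat \<times> nat) set" where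
  "KxK_vertices n m = {0..<n} \<times> {0..<m}"

definition KxK_edges :: "nat \<Rightarrow> nat \<Rightarrow> (nat \<times> nat) set set" where
  "KxK_edges n m = {{(a, b), (a', b')} | a b a' b'.
     a < n \<and> a' < n \<and> b < m \<and> b' < m \<and> a \<noteq> a' \<and> b \<noteq> b'}"

end

(*
  Lower bound: a vertex and its (n - 1)(m - 1) incident edges pairwise need distinct colours.

  Upper bound: by symmetry n is even. Colour the vertex (a, b) with b, and take a proper edge
  colouring c of K_n with colours 0, ..., n - 2. The edges of K_n x K_m lying over the edges of
  colour class i form disjoint copies of K_{m,m} minus a perfect matching. For i > 0 these are
  coloured with the m - 1 colours of block i by the cyclic difference b' - b mod m. For i = 0 the
  edge from (a, b) to (a', b'), a < a', gets colour L b b' for an idempotent latin square L of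
  order m; it avoids the vertex colours since L b b = b and L b' b' = b'. Idempotent latin squares
  exist for every order m other than 2: (b + c) / 2 mod m for odd m, and a prolongation of the
  one of order m - 1 for even m. Altogether m + (n - 2)(m - 1) = (n - 1)(m - 1) + 1 colours.
*)
theory Submission
  imports Defs "HOL-Number_Theory.Cong"
begin

definition edges_of :: "('a \<Rightarrow> 'a \<Rightarrow> bool) \<Rightarrow> 'a set set" where
  "edges_of adj = {{v, w} | v w. adj v w}"

lemma edges_of_memE:
  assumes "symp adj" "e \<in> edges_of adj" "v \<in> e"
  obtains w where "adj v w" "e = {v, w}"
proof -
  obtain x y where xy: "adj x y" "e = {x, y}"
    using assms(2) by (auto simp: edges_of_def)
  show ?thesis
  proof (cases "v = x")
    case True
    then show ?thesis
      using xy that by blast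
  next
    case False
    then have "v = y"
      using xy assms(3) by blast
    then show ?thesis
      using xy that sympD[OF assms(1)] by (metis insert_commute)
  qed
qed

lemma degree_edges_of:
  assumes "symp adj"
  shows "degree (edges_of adj) v = card {w. adj v w}"
proof -
  have "{e \<in> edges_of adj. v \<in> e} = (\<lambda>w. {v, w}) ` {w. adj v w}"
    using assms by (auto simp: edges_of_def dest: sympD)
  moreover have "inj_on (\<lambda>w. {v, w}) {w. adj v w}"
    by (rule inj_onI) (auto simp: doubleton_eq_iff)
  ultimately show ?thesis
    by (simp add: degree_def card_image)
qed

lemma degree_less_total_colours:
  assumes "total_colouring V E k cv ce" and "v \<in> V"
  shows "degree E v < k"
proof -
  let ?S = "{e \<in> E. v \<in> e}"
  have colours: "insert (cv v) (ce ` ?S) \<subseteq> {..<k}"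
    using assms by (auto simp: total_colouring_def)
  have "inj_on ce ?S"
    using assms(1) unfolding total_colouring_def inj_on_def by blast
  moreover have "cv v \<notin> ce ` ?S"
  proof
    assume "cv v \<in> ce ` ?S"
    then obtain e where "e \<in> E" "v \<in> e" "ce e = cv v"
      by auto
    then show False
      using assms(1) by (auto simp: total_colouring_def)
  qed
  ultimately have "card (insert (cv v) (ce ` ?S)) = degree E v + 1" if "finite ?S"
    using that by (simp add: degree_def card_image)
  moreover have "degree E v = 0" if "infinite ?S"
    using that by (simp add: degree_def)
  ultimately show ?thesis
    using card_mono[OF _ colours] colours by fastforce
qed

lemma total_colouring_pullback:
  assumes colouring: "total_colouring V (edges_of adj) k cv ce"
    and "inj h"
    and vertices: "\<And>v. v \<in> V' \<Longrightarrow> h v \<in> V"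
    and hom: "\<And>v w. adj' v w \<Longrightarrow> adj (h v) (h w)"
  shows "total_colouring V' (edges_of adj') k (cv \<circ> h) (\<lambda>e. ce (h ` e))"
proof -
  have edge: "h ` e \<in> edges_of adj" if "e \<in> edges_of adj'" for e
    using that hom by (fastforce simp: edges_of_def)
  have "h ` e \<noteq> h ` f" if "e \<noteq> f" for e f
    using that \<open>inj h\<close> by (simp add: inj_image_eq_iff)
  moreover have "h ` e \<inter> h ` f \<noteq> {}" if "e \<inter> f \<noteq> {}" for e f
    using that by blast
  ultimately show ?thesis
    using colouring edge[of "{_, _}"] vertices edge
    unfolding total_colouring_def by (auto simp: edges_of_def)
qed

text \<open>\<open>SOME\<close> picks an orientation of the edge; for symmetric \<open>F\<close> the choice does not matter.\<close>

definition edge_colour_of :: "('a \<Rightarrow> 'a \<Rightarrow> nat) \<Rightarrow> 'a set \<Rightarrow> nat" where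
  "edge_colour_of F e = (case SOME p. e = {fst p, snd p} of (v, w) \<Rightarrow> F v w)"

lemma edge_colour_of_doubleton:
  assumes "F v w = F w v"
  shows "edge_colour_of F {v, w} = F v w"
proof -
  obtain x y where xy: "(SOME p. {v, w} = {fst p, snd p}) = (x, y)"
    by fastforce
  have "{v, w} = {x, y}"
    using someI[of "\<lambda>p. {v, w} = {fst p, snd p}" "(v, w)"] unfolding xy by simp
  then have "(x, y) = (v, w) \<or> (x, y) = (w, v)"
    by (auto simp: doubleton_eq_iff)
  then show ?thesis
    using assms by (auto simp: edge_colour_of_def xy)
qed

lemma total_colouring_of_pair_colouring:
  assumes "symp adj"
    and vertex_colour: "\<And>v. v \<in> V \<Longrightarrow> cv v < k"
    and vertex_proper: "\<And>v w. adj v w \<Longrightarrow> cv v \<noteq> cv w"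
    and symmetric: "\<And>v w. adj v w \<Longrightarrow> F v w = F w v"
    and edge_colour: "\<And>v w. adj v w \<Longrightarrow> F v w < k"
    and edge_vertex: "\<And>v w. adj v w \<Longrightarrow> F v w \<noteq> cv v"
    and edge_proper: "\<And>v w w'. adj v w \<Longrightarrow> adj v w' \<Longrightarrow> w \<noteq> w' \<Longrightarrow> F v w \<noteq> F v w'"
  shows "total_colouring V (edges_of adj) k cv (edge_colour_of F)"
  unfolding total_colouring_def
proof (intro conjI ballI impI)
  have colour: "edge_colour_of F {v, w} = F v w" if "adj v w" for v w
    using that by (intro edge_colour_of_doubleton symmetric)
  show "edge_colour_of F e \<noteq> edge_colour_of F f"
    if e: "e \<in> edges_of adj" and f: "f \<in> edges_of adj" and ef: "e \<noteq> f \<and> e \<inter> f \<noteq> {}" for e f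
  proof -
    obtain v where "v \<in> e" "v \<in> f"
      using ef by blast
    obtain w where "adj v w" "e = {v, w}"
      using edges_of_memE[OF \<open>symp adj\<close> e \<open>v \<in> e\<close>] .
    moreover obtain w' where "adj v w'" "f = {v, w'}"
      using edges_of_memE[OF \<open>symp adj\<close> f \<open>v \<in> f\<close>] .
    ultimately have "w \<noteq> w'"
      using ef by blast
    with \<open>adj v w\<close> \<open>adj v w'\<close> show ?thesis
      unfolding \<open>e = {v, w}\<close> \<open>f = {v, w'}\<close> colour[OF \<open>adj v w\<close>] colour[OF \<open>adj v w'\<close>]
      by (rule edge_proper)
  qed
  show "edge_colour_of F e < k" if e: "e \<in> edges_of adj" for e
  proof -
    obtain v w where "adj v w" "e = {v, w}"
      using e by (auto simp: edges_of_def)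
    then show ?thesis
      using colour edge_colour by simp
  qed
  show "edge_colour_of F e \<noteq> cv v" if ev: "e \<in> edges_of adj" "v \<in> e" for e v
  proof -
    obtain w where "adj v w" "e = {v, w}"
      using edges_of_memE[OF \<open>symp adj\<close> ev] .
    then show ?thesis
      using colour edge_vertex by simp
  qed
  show "cv u \<noteq> cv v" if uv: "{u, v} \<in> edges_of adj" for u v
  proof -
    obtain w where "adj u w" "{u, v} = {u, w}"
      using edges_of_memE[OF \<open>symp adj\<close> uv] by blast
    then show ?thesis
      using vertex_proper by (auto simp: doubleton_eq_iff)
  qed
  show "cv v < k" if "v \<in> V" for v
    using that vertex_colour by blast
qed

definition KxK_adjacent :: "nat \<Rightarrow> nat \<Rightarrow> nat \<times> nat \<Rightarrow> nat \<times> nat \<Rightarrow> bool" where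
  "KxK_adjacent n m v w \<longleftrightarrow>
     fst v < n \<and> fst w < n \<and> snd v < m \<and> snd w < m \<and> fst v \<noteq> fst w \<and> snd v \<noteq> snd w"

lemma KxK_edges_eq: "KxK_edges n m = edges_of (KxK_adjacent n m)"
  unfolding KxK_edges_def edges_of_def KxK_adjacent_def
  by (metis (no_types, opaque_lifting) fst_conv snd_conv prod.collapse)

lemma symp_KxK_adjacent: "symp (KxK_adjacent n m)"
  by (auto simp: symp_def KxK_adjacent_def)

lemma KxK_adjacent_swap: "KxK_adjacent n m v w \<Longrightarrow> KxK_adjacent m n (prod.swap v) (prod.swap w)"
  by (simp add: KxK_adjacent_def)

lemma degree_KxK:
  assumes "v \<in> KxK_vertices n m"
  shows "degree (KxK_edges n m) v = (n - 1) * (m - 1)"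
proof -
  have "fst v < n" "snd v < m"
    using assms by (auto simp: KxK_vertices_def)
  moreover have "{w. KxK_adjacent n m v w} = ({..<n} - {fst v}) \<times> ({..<m} - {snd v})"
    using calculation by (auto simp: KxK_adjacent_def)
  ultimately show ?thesis
    by (simp add: KxK_edges_eq degree_edges_of symp_KxK_adjacent card_cartesian_product)
qed

lemma max_degree_KxK:
  assumes "n \<ge> 1" "m \<ge> 1"
  shows "max_degree (KxK_vertices n m) (KxK_edges n m) = (n - 1) * (m - 1)"
proof -
  have "(0, 0) \<in> KxK_vertices n m"
    using assms by (simp add: KxK_vertices_def)
  then have "degree (KxK_edges n m) ` KxK_vertices n m = {(n - 1) * (m - 1)}"
    by (simp add: degree_KxK image_constant cong: image_cong)
  then show ?thesis
    by (simp add: max_degree_def)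
qed

lemma total_colouring_KxK_swap:
  assumes "total_colouring (KxK_vertices m n) (KxK_edges m n) k cv ce"
  shows "total_colouring (KxK_vertices n m) (KxK_edges n m) k
           (cv \<circ> prod.swap) (\<lambda>e. ce (prod.swap ` e))"
  using assms unfolding KxK_edges_eq
  by (rule total_colouring_pullback) (auto simp: KxK_vertices_def KxK_adjacent_swap)

definition idempotent_latin_square :: "nat \<Rightarrow> (nat \<Rightarrow> nat \<Rightarrow> nat) \<Rightarrow> bool" where
  "idempotent_latin_square q L \<longleftrightarrow>
     (\<forall>b<q. \<forall>c<q. L b c < q) \<and> (\<forall>b<q. L b b = b) \<and>
     (\<forall>b<q. inj_on (L b) {..<q}) \<and> (\<forall>c<q. inj_on (\<lambda>b. L b c) {..<q})"

lemma idempotent_latin_square_less: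
  "idempotent_latin_square q L \<Longrightarrow> b < q \<Longrightarrow> c < q \<Longrightarrow> L b c < q"
  unfolding idempotent_latin_square_def by blast

lemma idempotent_latin_square_diag:
  "idempotent_latin_square q L \<Longrightarrow> b < q \<Longrightarrow> L b b = b"
  unfolding idempotent_latin_square_def by blast

lemma idempotent_latin_square_row_inj:
  "idempotent_latin_square q L \<Longrightarrow> L b c = L b d \<Longrightarrow> b < q \<Longrightarrow> c < q \<Longrightarrow> d < q \<Longrightarrow> c = d"
  unfolding idempotent_latin_square_def inj_on_def by blast

lemma idempotent_latin_square_col_inj:
  "idempotent_latin_square q L \<Longrightarrow> L b c = L b' c \<Longrightarrow> b < q \<Longrightarrow> b' < q \<Longrightarrow> c < q \<Longrightarrow> b = b'"
  unfolding idempotent_latin_square_def inj_on_def by blast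

lemma odd_half_Suc_inverse:
  assumes "odd q"
  shows "[2 * (Suc q div 2) = 1] (mod q)" and "coprime (Suc q div 2) q"
proof -
  have "2 * (Suc q div 2) = q + 1"
    using assms by simp
  then show half: "[2 * (Suc q div 2) = 1] (mod q)"
    by (simp only: cong_def mod_add_self1)
  then show "coprime (Suc q div 2) q"
    by (metis cong_imp_coprime coprime_1_left coprime_mult_left_iff cong_sym)
qed

text \<open>The square \<open>(b + c) / 2\<close> modulo an odd \<open>q\<close>: \<open>Suc q div 2\<close> is the inverse of \<open>2\<close>.\<close>

definition midpoint_square :: "nat \<Rightarrow> nat \<Rightarrow> nat \<Rightarrow> nat" where
  "midpoint_square q b c = (Suc q div 2) * (b + c) mod q"

lemma midpoint_square_cong: "[midpoint_square q b c = Suc q div 2 * (b + c)] (mod q)"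
  by (simp add: midpoint_square_def cong_def)

lemma midpoint_square_commute: "midpoint_square q b c = midpoint_square q c b"
  by (simp add: midpoint_square_def add.commute)

lemma idempotent_latin_square_midpoint:
  assumes "odd q"
  shows "idempotent_latin_square q (midpoint_square q)"
proof -
  let ?h = "Suc q div 2"
  have cancel: "c = d" if "midpoint_square q b c = midpoint_square q b d" "c < q" "d < q" for b c d
  proof -
    have "[?h * (b + c) = ?h * (b + d)] (mod q)"
      using that(1) by (simp add: midpoint_square_def cong_def)
    then have "[b + c = b + d] (mod q)"
      using cong_mult_lcancel_nat odd_half_Suc_inverse(2)[OF assms] by blast
    then show "c = d"
      using that(2,3) cong_add_lcancel_nat cong_less_modulus_unique_nat by blast
  qed
  have "[midpoint_square q b b = b] (mod q)" for b
  proof -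
    have "[midpoint_square q b b = ?h * (b + b)] (mod q)"
      by (rule midpoint_square_cong)
    also have "?h * (b + b) = 2 * ?h * b"
      by simp
    also have "[2 * ?h * b = 1 * b] (mod q)"
      using odd_half_Suc_inverse(1)[OF assms] by (intro cong_mult cong_refl)
    finally show ?thesis
      by simp
  qed
  then have "midpoint_square q b b = b" if "b < q" for b
    using that by (simp add: cong_def midpoint_square_def)
  moreover have "midpoint_square q b c < q" if "b < q" for b c
    using that by (simp add: midpoint_square_def)
  moreover have "inj_on (midpoint_square q b) {..<q}" for b
    using cancel by (auto intro: inj_onI)
  ultimately show ?thesis
    unfolding idempotent_latin_square_def by (simp add: midpoint_square_commute[of q _])
qed

lemma midpoint_square_successor_cong:
  assumes "odd q"
  shows "[midpoint_square q b (Suc b mod q) = b + Suc q div 2] (mod q)"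
proof -
  let ?h = "Suc q div 2"
  have "[midpoint_square q b (Suc b mod q) = ?h * (b + Suc b mod q)] (mod q)"
    by (rule midpoint_square_cong)
  also have "[?h * (b + Suc b mod q) = ?h * (b + Suc b)] (mod q)"
    by (intro cong_mult cong_add cong_refl) (simp add: cong_def)
  also have "?h * (b + Suc b) = 2 * ?h * b + ?h"
    by (simp add: algebra_simps)
  also have "[2 * ?h * b + ?h = 1 * b + ?h] (mod q)"
    using odd_half_Suc_inverse(1)[OF assms] by (intro cong_add cong_mult cong_refl)
  finally show ?thesis
    by simp
qed

lemma inj_on_midpoint_square_successor:
  assumes "odd q"
  shows "inj_on (\<lambda>b. midpoint_square q b (Suc b mod q)) {..<q}"
proof (rule inj_onI)
  fix b b' assume "b \<in> {..<q}" "b' \<in> {..<q}"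
    and eq: "midpoint_square q b (Suc b mod q) = midpoint_square q b' (Suc b' mod q)"
  note successor = midpoint_square_successor_cong[OF assms]
  have "[b + Suc q div 2 = midpoint_square q b (Suc b mod q)] (mod q)"
    using successor by (rule cong_sym)
  also note eq
  also have "[midpoint_square q b' (Suc b' mod q) = b' + Suc q div 2] (mod q)"
    by (rule successor)
  finally have "[b = b'] (mod q)"
    by (simp add: cong_add_rcancel_nat)
  then show "b = b'"
    using \<open>b \<in> {..<q}\<close> \<open>b' \<in> {..<q}\<close> by (simp add: cong_less_modulus_unique_nat)
qed

lemma inj_on_if_eq:
  fixes y :: "'b::order"
  assumes "inj_on g (A - {a})" and "\<And>x. x \<in> A - {a} \<Longrightarrow> g x < y"
  shows "inj_on (\<lambda>x. if x = a then y else g x) A"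
  using assms unfolding inj_on_def by (metis Diff_iff less_irrefl singletonD)

text \<open>Prolongation along the transversal of cells \<open>(b, \<tau> b)\<close>, where \<open>\<sigma>\<close> is the inverse of \<open>\<tau>\<close>:
  these cells receive the new symbol \<open>q\<close>, and the symbol displaced from \<open>(b, \<tau> b)\<close> moves to the
  new cells \<open>(b, q)\<close> and \<open>(q, \<tau> b)\<close>.\<close>

definition prolongation ::
  "nat \<Rightarrow> (nat \<Rightarrow> nat \<Rightarrow> nat) \<Rightarrow> (nat \<Rightarrow> nat) \<Rightarrow> (nat \<Rightarrow> nat) \<Rightarrow> nat \<Rightarrow> nat \<Rightarrow> nat" where
  "prolongation q L \<tau> \<sigma> b c =
     (if b = q then (if c = q then q else L (\<sigma> c) c)
      else if c = q then L b (\<tau> b)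
      else if c = \<tau> b then q
      else L b c)"

context
  fixes q :: nat and L :: "nat \<Rightarrow> nat \<Rightarrow> nat" and \<tau> \<sigma> :: "nat \<Rightarrow> nat"
  assumes latin: "idempotent_latin_square q L"
    and \<tau>: "\<And>b. b < q \<Longrightarrow> \<tau> b < q \<and> \<tau> b \<noteq> b \<and> \<sigma> (\<tau> b) = b"
    and \<sigma>: "\<And>c. c < q \<Longrightarrow> \<sigma> c < q \<and> \<tau> (\<sigma> c) = c"
    and transversal: "inj_on (\<lambda>b. L b (\<tau> b)) {..<q}"
begin

lemma inj_on_prolongation_last_row: "inj_on (prolongation q L \<tau> \<sigma> q) {..<Suc q}"
proof -
  have "inj_on (\<lambda>c. L (\<sigma> c) c) ({..<Suc q} - {q})"
  proof (rule inj_onI)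
    fix c d assume "c \<in> {..<Suc q} - {q}" "d \<in> {..<Suc q} - {q}" and eq: "L (\<sigma> c) c = L (\<sigma> d) d"
    then have "\<sigma> c < q" "\<tau> (\<sigma> c) = c" "\<sigma> d < q" "\<tau> (\<sigma> d) = d"
      using \<sigma> by auto
    with eq have "L (\<sigma> c) (\<tau> (\<sigma> c)) = L (\<sigma> d) (\<tau> (\<sigma> d))"
      by simp
    from inj_onD[OF transversal this] have "\<sigma> c = \<sigma> d"
      using \<open>\<sigma> c < q\<close> \<open>\<sigma> d < q\<close> by simp
    then show "c = d"
      by (metis \<open>\<tau> (\<sigma> c) = c\<close> \<open>\<tau> (\<sigma> d) = d\<close>)
  qed
  moreover have "L (\<sigma> c) c < q" if "c \<in> {..<Suc q} - {q}" for c
    using that \<sigma> idempotent_latin_square_less[OF latin] by (auto simp: less_Suc_eq)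
  ultimately have "inj_on (\<lambda>c. if c = q then q else L (\<sigma> c) c) {..<Suc q}"
    by (rule inj_on_if_eq)
  moreover have "prolongation q L \<tau> \<sigma> q = (\<lambda>c. if c = q then q else L (\<sigma> c) c)"
    by (simp add: fun_eq_iff prolongation_def)
  ultimately show ?thesis
    by simp
qed

lemma inj_on_prolongation_row:
  assumes "b < q"
  shows "inj_on (prolongation q L \<tau> \<sigma> b) {..<Suc q}"
proof -
  let ?\<rho> = "\<lambda>c. if c = q then \<tau> b else c"
  have "inj_on (\<lambda>c. L b (?\<rho> c)) ({..<Suc q} - {\<tau> b})"
  proof (rule inj_onI)
    fix c d assume cd: "c \<in> {..<Suc q} - {\<tau> b}" "d \<in> {..<Suc q} - {\<tau> b}"
      and "L b (?\<rho> c) = L b (?\<rho> d)"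
    moreover have "?\<rho> c < q" "?\<rho> d < q"
      using cd \<tau> assms by auto
    ultimately have "?\<rho> c = ?\<rho> d"
      using idempotent_latin_square_row_inj[OF latin] assms by blast
    then show "c = d"
      using cd by (auto split: if_splits)
  qed
  moreover have "L b (?\<rho> c) < q" if "c \<in> {..<Suc q} - {\<tau> b}" for c
    using that \<tau> idempotent_latin_square_less[OF latin] assms by (auto simp: less_Suc_eq)
  ultimately have "inj_on (\<lambda>c. if c = \<tau> b then q else L b (?\<rho> c)) {..<Suc q}"
    by (rule inj_on_if_eq)
  moreover have "prolongation q L \<tau> \<sigma> b = (\<lambda>c. if c = \<tau> b then q else L b (?\<rho> c))"
    using \<tau> assms by (auto simp: fun_eq_iff prolongation_def)
  ultimately show ?thesis
    by simp
qed

lemma inj_on_prolongation_last_col: "inj_on (\<lambda>b. prolongation q L \<tau> \<sigma> b q) {..<Suc q}"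
proof -
  have "inj_on (\<lambda>b. L b (\<tau> b)) ({..<Suc q} - {q})"
    using transversal by (simp add: lessThan_Suc Diff_insert_absorb)
  moreover have "L b (\<tau> b) < q" if "b \<in> {..<Suc q} - {q}" for b
    using that \<tau> idempotent_latin_square_less[OF latin] by (auto simp: less_Suc_eq)
  ultimately have "inj_on (\<lambda>b. if b = q then q else L b (\<tau> b)) {..<Suc q}"
    by (rule inj_on_if_eq)
  moreover have "prolongation q L \<tau> \<sigma> b q = (if b = q then q else L b (\<tau> b))" for b
    by (simp add: prolongation_def)
  ultimately show ?thesis
    by simp
qed

lemma inj_on_prolongation_col:
  assumes "c < q"
  shows "inj_on (\<lambda>b. prolongation q L \<tau> \<sigma> b c) {..<Suc q}"
proof -
  let ?\<rho> = "\<lambda>b. if b = q then \<sigma> c else b"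
  have "inj_on (\<lambda>b. L (?\<rho> b) c) ({..<Suc q} - {\<sigma> c})"
  proof (rule inj_onI)
    fix b b' assume bb': "b \<in> {..<Suc q} - {\<sigma> c}" "b' \<in> {..<Suc q} - {\<sigma> c}"
      and "L (?\<rho> b) c = L (?\<rho> b') c"
    moreover have "?\<rho> b < q" "?\<rho> b' < q"
      using bb' \<sigma> assms by auto
    ultimately have "?\<rho> b = ?\<rho> b'"
      using idempotent_latin_square_col_inj[OF latin] assms by blast
    then show "b = b'"
      using bb' by (auto split: if_splits)
  qed
  moreover have "L (?\<rho> b) c < q" if "b \<in> {..<Suc q} - {\<sigma> c}" for b
    using that \<sigma> idempotent_latin_square_less[OF latin] assms by (auto simp: less_Suc_eq)
  ultimately have inj: "inj_on (\<lambda>b. if b = \<sigma> c then q else L (?\<rho> b) c) {..<Suc q}"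
    by (rule inj_on_if_eq)
  have "\<sigma> c < q" "\<tau> (\<sigma> c) = c"
    using \<sigma> assms by auto
  have eq: "prolongation q L \<tau> \<sigma> b c = (if b = \<sigma> c then q else L (?\<rho> b) c)"
    if "b \<in> {..<Suc q}" for b
  proof (cases "b = q")
    case False
    with that have "\<sigma> (\<tau> b) = b"
      using \<tau> by auto
    with \<open>\<tau> (\<sigma> c) = c\<close> have "c = \<tau> b \<longleftrightarrow> b = \<sigma> c"
      by auto
    with False show ?thesis
      using assms by (simp add: prolongation_def)
  qed (use \<open>\<sigma> c < q\<close> assms in \<open>simp add: prolongation_def\<close>)
  show ?thesis
    using inj_on_cong[OF eq] inj by (rule iffD2)
qed

lemma idempotent_latin_square_prolongation:
  "idempotent_latin_square (Suc q) (prolongation q L \<tau> \<sigma>)"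
proof -
  have "prolongation q L \<tau> \<sigma> b c < Suc q" if "b < Suc q" "c < Suc q" for b c
    using that \<tau> \<sigma> idempotent_latin_square_less[OF latin]
    by (auto simp: prolongation_def less_Suc_eq)
  moreover have "prolongation q L \<tau> \<sigma> b b = b" if "b < Suc q" for b
  proof (cases "b = q")
    case False
    with that have "b < q"
      by simp
    then have "\<tau> b \<noteq> b" "L b b = b"
      using \<tau> idempotent_latin_square_diag[OF latin] by auto
    with \<open>b < q\<close> show ?thesis
      by (simp add: prolongation_def)
  qed (simp add: prolongation_def)
  moreover have "inj_on (prolongation q L \<tau> \<sigma> b) {..<Suc q}" if "b < Suc q" for b
    using that inj_on_prolongation_row inj_on_prolongation_last_row by (cases "b = q") auto
  moreover have "inj_on (\<lambda>b. prolongation q L \<tau> \<sigma> b c) {..<Suc q}" if "c < Suc q" for c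
    using that inj_on_prolongation_col inj_on_prolongation_last_col by (cases "c = q") auto
  ultimately show ?thesis
    unfolding idempotent_latin_square_def by blast
qed

end

lemma idempotent_latin_square_Suc_odd:
  assumes "odd p" "1 < p"
  shows "idempotent_latin_square (Suc p)
    (prolongation p (midpoint_square p) (\<lambda>b. Suc b mod p) (\<lambda>c. if c = 0 then p - 1 else c - 1))"
proof (rule idempotent_latin_square_prolongation)
  show "idempotent_latin_square p (midpoint_square p)"
    using assms(1) by (rule idempotent_latin_square_midpoint)
  show "inj_on (\<lambda>b. midpoint_square p b (Suc b mod p)) {..<p}"
    using assms(1) by (rule inj_on_midpoint_square_successor)
qed (use assms in \<open>auto simp: mod_Suc\<close>)

lemma idempotent_latin_square_exists:
  assumes "q \<noteq> 2"
  shows "\<exists>L. idempotent_latin_square q L"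
proof -
  have "odd q \<or> q = 0 \<or> even q \<and> 2 < q"
    using assms by presburger
  then consider "odd q" | "q = 0" | "even q" "2 < q"
    by blast
  then show ?thesis
  proof cases
    case 1
    then show ?thesis
      using idempotent_latin_square_midpoint by blast
  next
    case 2
    then show ?thesis
      by (auto simp: idempotent_latin_square_def)
  next
    case 3
    then have "q = Suc (q - 1)" "odd (q - 1)" "1 < q - 1"
      by auto
    then show ?thesis
      using idempotent_latin_square_Suc_odd by metis
  qed
qed

definition complete_graph_edge_colouring :: "nat \<Rightarrow> nat \<Rightarrow> (nat \<Rightarrow> nat \<Rightarrow> nat) \<Rightarrow> bool" where
  "complete_graph_edge_colouring n k c \<longleftrightarrow>
     (\<forall>a<n. \<forall>a'<n. a \<noteq> a' \<longrightarrow> c a a' = c a' a \<and> c a a' < k) \<and>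
     (\<forall>a<n. inj_on (c a) ({..<n} - {a}))"

lemma complete_graph_edge_colouring_of_latin_square:
  assumes latin: "idempotent_latin_square p M"
    and symmetric: "\<And>b c. b < p \<Longrightarrow> c < p \<Longrightarrow> M b c = M c b"
  shows "complete_graph_edge_colouring (Suc p) p
           (\<lambda>a a'. if a = p then a' else if a' = p then a else M a a')"
    (is "complete_graph_edge_colouring _ _ ?c")
proof -
  have "?c a a' = ?c a' a \<and> ?c a a' < p" if "a < Suc p" "a' < Suc p" "a \<noteq> a'" for a a'
    using that symmetric idempotent_latin_square_less[OF latin] by (auto simp: less_Suc_eq)
  moreover have "inj_on (?c a) ({..<Suc p} - {a})" if "a < Suc p" for a
  proof (cases "a = p")
    case False
    with that have "a < p"
      by simp
    let ?\<rho> = "\<lambda>a'. if a' = p then a else a'"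
    have "?c a a' = M a (?\<rho> a')" for a'
      using idempotent_latin_square_diag[OF latin \<open>a < p\<close>] \<open>a < p\<close> by auto
    moreover have "inj_on (\<lambda>a'. M a (?\<rho> a')) ({..<Suc p} - {a})"
    proof (rule inj_onI)
      fix x y assume xy: "x \<in> {..<Suc p} - {a}" "y \<in> {..<Suc p} - {a}" "M a (?\<rho> x) = M a (?\<rho> y)"
      moreover have "?\<rho> x < p" "?\<rho> y < p"
        using xy \<open>a < p\<close> by auto
      ultimately have "?\<rho> x = ?\<rho> y"
        using idempotent_latin_square_row_inj[OF latin] \<open>a < p\<close> by blast
      then show "x = y"
        using xy by (auto split: if_splits)
    qed
    ultimately show ?thesis
      by simp
  qed (simp add: inj_on_def)
  ultimately show ?thesis
    unfolding complete_graph_edge_colouring_def by blast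
qed

lemma complete_graph_edge_colouring_exists:
  assumes "even n"
  shows "\<exists>c. complete_graph_edge_colouring n (n - 1) c"
proof (cases n)
  case 0
  then show ?thesis
    by (simp add: complete_graph_edge_colouring_def)
next
  case (Suc p)
  with assms have "odd p"
    by simp
  then have "complete_graph_edge_colouring (Suc p) p
      (\<lambda>a a'. if a = p then a' else if a' = p then a else midpoint_square p a a')"
    by (intro complete_graph_edge_colouring_of_latin_square idempotent_latin_square_midpoint
        midpoint_square_commute)
  then show ?thesis
    using Suc by auto
qed

definition cyclic_diff :: "nat \<Rightarrow> nat \<Rightarrow> nat \<Rightarrow> nat" where
  "cyclic_diff m x y = (y + m - x) mod m"

lemma cyclic_diff_eq:
  "x < m \<Longrightarrow> y < m \<Longrightarrow> cyclic_diff m x y = (if x \<le> y then y - x else y + m - x)"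
  by (auto simp: cyclic_diff_def le_mod_geq)

lemma cyclic_diff_inj:
  assumes "x < m" "y < m" "x' < m" "y' < m" "cyclic_diff m x y = cyclic_diff m x' y'"
  shows "x = x' \<longleftrightarrow> y = y'"
  using assms by (auto simp: cyclic_diff_eq split: if_splits)

text \<open>Block \<open>i\<close> of colours: \<open>{0..<m}\<close> for \<open>i = 0\<close>, which also holds the vertex colours, and
  \<open>{i * (m - 1) + 1 .. (i + 1) * (m - 1)}\<close> for \<open>i > 0\<close>.\<close>

definition block_colour :: "(nat \<Rightarrow> nat \<Rightarrow> nat) \<Rightarrow> nat \<Rightarrow> nat \<Rightarrow> nat \<Rightarrow> nat \<Rightarrow> nat" where
  "block_colour L m i x y = i * (m - 1) + (if i = 0 then L x y else cyclic_diff m x y)"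

context
  fixes L :: "nat \<Rightarrow> nat \<Rightarrow> nat" and m :: nat
  assumes latin: "idempotent_latin_square m L"
begin

lemma block_colour_bounds:
  assumes "x < m" "y < m" "x \<noteq> y"
  shows "block_colour L m i x y \<le> Suc i * (m - 1)"
    and "0 < i \<Longrightarrow> i * (m - 1) < block_colour L m i x y"
proof -
  have "L x y < m"
    using idempotent_latin_square_less[OF latin] assms by blast
  then show "block_colour L m i x y \<le> Suc i * (m - 1)"
    using assms by (auto simp: block_colour_def cyclic_diff_eq)
  show "i * (m - 1) < block_colour L m i x y" if "0 < i"
    using that assms by (auto simp: block_colour_def cyclic_diff_eq)
qed

lemma block_colour_less:
  assumes "i < n - 1" "x < m" "y < m" "x \<noteq> y"
  shows "block_colour L m i x y < (n - 1) * (m - 1) + 1"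
proof -
  have "Suc i * (m - 1) \<le> (n - 1) * (m - 1)"
    using assms(1) by (intro mult_le_mono1) simp
  then show ?thesis
    using block_colour_bounds(1)[OF assms(2-4), of i] by linarith
qed

lemma block_colour_ne_vertex:
  assumes "x < m" "y < m" "x \<noteq> y"
  shows "block_colour L m i x y \<noteq> x" and "block_colour L m i x y \<noteq> y"
proof -
  have "L x y \<noteq> L x x" "L x y \<noteq> L y y"
    using idempotent_latin_square_row_inj[OF latin] idempotent_latin_square_col_inj[OF latin] assms
    by blast+
  then have "L x y \<noteq> x \<and> L x y \<noteq> y"
    using idempotent_latin_square_diag[OF latin] assms by simp
  moreover have "max x y < block_colour L m i x y" if "0 < i"
  proof -
    have "m - 1 \<le> i * (m - 1)"
      using that by simp
    then show ?thesis
      using block_colour_bounds(2)[OF assms that] assms by linarith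
  qed
  ultimately show "block_colour L m i x y \<noteq> x" "block_colour L m i x y \<noteq> y"
    by (fastforce simp: block_colour_def)+
qed

lemma block_colour_mono_block:
  assumes "i < i'" "x < m" "y < m" "x \<noteq> y" "x' < m" "y' < m" "x' \<noteq> y'"
  shows "block_colour L m i x y < block_colour L m i' x' y'"
proof -
  have "Suc i * (m - 1) \<le> i' * (m - 1)"
    using assms(1) by (intro mult_le_mono1) simp
  then show ?thesis
    using block_colour_bounds(1)[OF assms(2-4), of i] block_colour_bounds(2)[OF assms(5-7), of i']
      assms(1)
    by linarith
qed

lemma block_colour_inj_row:
  assumes "x < m" "y < m" "y' < m" "block_colour L m i x y = block_colour L m i x y'"
  shows "y = y'"
proof (cases "i = 0")
  case True
  with assms show ?thesis
    using idempotent_latin_square_row_inj[OF latin] by (simp add: block_colour_def)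
next
  case False
  with assms show ?thesis
    using cyclic_diff_inj[of x m y x y'] by (simp add: block_colour_def)
qed

lemma block_colour_inj_col:
  assumes "x < m" "x' < m" "y < m" "block_colour L m i x y = block_colour L m i x' y"
  shows "x = x'"
proof (cases "i = 0")
  case True
  with assms show ?thesis
    using idempotent_latin_square_col_inj[OF latin] by (simp add: block_colour_def)
next
  case False
  with assms show ?thesis
    using cyclic_diff_inj[of x m y x' y] by (simp add: block_colour_def)
qed

end

definition product_colour ::
  "(nat \<Rightarrow> nat \<Rightarrow> nat) \<Rightarrow> (nat \<Rightarrow> nat \<Rightarrow> nat) \<Rightarrow> nat \<Rightarrow> nat \<times> nat \<Rightarrow> nat \<times> nat \<Rightarrow> nat" where
  "product_colour c L m v w =
     (if fst v < fst w then block_colour L m (c (fst v) (fst w)) (snd v) (snd w)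
      else block_colour L m (c (fst v) (fst w)) (snd w) (snd v))"

lemma total_colouring_KxK_product_colour:
  assumes c: "complete_graph_edge_colouring n (n - 1) c" and latin: "idempotent_latin_square m L"
    and "2 \<le> n"
  shows "total_colouring (KxK_vertices n m) (KxK_edges n m) ((n - 1) * (m - 1) + 1) snd
           (edge_colour_of (product_colour c L m))"
  unfolding KxK_edges_eq
proof (rule total_colouring_of_pair_colouring[OF symp_KxK_adjacent])
  have c_sym: "c a a' = c a' a" and c_less: "c a a' < n - 1" if "a < n" "a' < n" "a \<noteq> a'" for a a'
    using c that unfolding complete_graph_edge_colouring_def by blast+
  have c_inj: "c a a' \<noteq> c a a''" if "a < n" "a' < n" "a'' < n" "a \<noteq> a'" "a \<noteq> a''" "a' \<noteq> a''"
    for a a' a''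
    using c that unfolding complete_graph_edge_colouring_def by (blast dest: inj_onD)
  show "snd v < (n - 1) * (m - 1) + 1" if "v \<in> KxK_vertices n m" for v
  proof -
    have "m \<le> (n - 1) * (m - 1) + 1"
      using \<open>2 \<le> n\<close> by (cases m) auto
    with that show ?thesis
      by (auto simp: KxK_vertices_def)
  qed
  show "snd v \<noteq> snd w" if "KxK_adjacent n m v w" for v w
    using that by (simp add: KxK_adjacent_def)
  show "product_colour c L m v w = product_colour c L m w v" if "KxK_adjacent n m v w" for v w
    using that c_sym by (auto simp: product_colour_def KxK_adjacent_def)
  show "product_colour c L m v w < (n - 1) * (m - 1) + 1" if "KxK_adjacent n m v w" for v w
    using that c_less block_colour_less[OF latin]
    by (auto simp: product_colour_def KxK_adjacent_def)
  show "product_colour c L m v w \<noteq> snd v" if "KxK_adjacent n m v w" for v w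
    using that block_colour_ne_vertex[OF latin]
    by (auto simp: product_colour_def KxK_adjacent_def)
  show "product_colour c L m v w \<noteq> product_colour c L m v w'"
    if "KxK_adjacent n m v w" "KxK_adjacent n m v w'" "w \<noteq> w'" for v w w'
  proof (cases "fst w = fst w'")
    case True
    then have "snd w \<noteq> snd w'"
      using \<open>w \<noteq> w'\<close> by (simp add: prod_eq_iff)
    then show ?thesis
      using that True block_colour_inj_row[OF latin] block_colour_inj_col[OF latin]
      by (auto simp: product_colour_def KxK_adjacent_def)
  next
    case False
    then have "c (fst v) (fst w) \<noteq> c (fst v) (fst w')"
      using that c_inj by (auto simp: KxK_adjacent_def)
    then show ?thesis
      using that block_colour_mono_block[OF latin]
      by (auto simp: product_colour_def KxK_adjacent_def neq_iff)
  qed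
qed

lemma total_colouring_KxK_exists:
  assumes "even n" "2 \<le> n" "m \<noteq> 2"
  shows "\<exists>cv ce. total_colouring (KxK_vertices n m) (KxK_edges n m) ((n - 1) * (m - 1) + 1) cv ce"
proof -
  obtain c where "complete_graph_edge_colouring n (n - 1) c"
    using complete_graph_edge_colouring_exists[OF \<open>even n\<close>] by blast
  moreover obtain L where "idempotent_latin_square m L"
    using idempotent_latin_square_exists[OF \<open>m \<noteq> 2\<close>] by blast
  ultimately show ?thesis
    using total_colouring_KxK_product_colour \<open>2 \<le> n\<close> by blast
qed

theorem theorem3:
  fixes n m :: nat
  assumes "n \<ge> 3" and "m \<ge> 3" and "even n \<or> even m"
  shows "type_I (KxK_vertices n m) (KxK_edges n m) \<and>
         total_chromatic_number (KxK_vertices n m) (KxK_edges n m) = (n - 1) * (m - 1) + 1"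
proof -
  let ?V = "KxK_vertices n m" and ?E = "KxK_edges n m" and ?k = "(n - 1) * (m - 1) + 1"
  have colouring: "\<exists>cv ce. total_colouring ?V ?E ?k cv ce"
  proof (cases "even n")
    case True
    then show ?thesis
      using total_colouring_KxK_exists assms by simp
  next
    case False
    then obtain cv ce where
      "total_colouring (KxK_vertices m n) (KxK_edges m n) ((m - 1) * (n - 1) + 1) cv ce"
      using total_colouring_KxK_exists assms by fastforce
    then show ?thesis
      using total_colouring_KxK_swap by (metis mult.commute)
  qed
  have "?k \<le> k" if "total_colouring ?V ?E k cv ce" for k cv ce
  proof -
    have "(0, 0) \<in> ?V"
      using assms by (simp add: KxK_vertices_def)
    then show ?thesis
      using degree_less_total_colours[OF that] degree_KxK by fastforce
  qed
  with colouring have "total_chromatic_number ?V ?E = ?k"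
    unfolding total_chromatic_number_def by (intro Least_equality) auto
  moreover have "max_degree ?V ?E = (n - 1) * (m - 1)"
    using assms by (intro max_degree_KxK) auto
  ultimately show ?thesis
    by (simp add: type_I_def)
qed

end
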